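(* Let $G$ and $H$ be graphs with vertex set $\omega$. Then: (i) $G^{<\alpha>}\le G$ for every ordinal $\alpha$; (ii) if $\alpha\le\beta$ then $G^{<\alpha>}\le G^{<\beta>}$; (iii) $G\le H$ if and only if $G^{<\alpha>}\le H$ for every $\alpha<\omega_1$.
   Context: Graphs are simple and loopless; $G\le H$ means there is a homomorphism (edge-preserving vertex map) $G\to H$. For a graph $G$ with vertex set $\omega$ and an ordinal $\alpha$, $G^{<\alpha>}$ is the graph whose vertices are all finite strictly decreasing sequences of ordinals $<\alpha$ (including the empty sequence), with $\{\nu,\mu\}$ an edge iff $\nu$ is a proper initial segment of $\mu$ and $\{\ell(\nu),\ell(\mu)\}\in E(G)$, where $\ell(\nu)\in\omega$ denotes the length of $\nu$. *)

theory Defs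
  imports Main "HOL-Library.Sublist"
begin

definition is_graph :: "(nat \<Rightarrow> nat \<Rightarrow> bool) \<Rightarrow> bool" where
  "is_graph E \<longleftrightarrow> (\<forall>x y. E x y \<longrightarrow> E y x) \<and> (\<forall>x. \<not> E x x)"

definition hom_le :: "'v set \<Rightarrow> ('v \<Rightarrow> 'v \<Rightarrow> bool) \<Rightarrow> 'w set \<Rightarrow> ('w \<Rightarrow> 'w \<Rightarrow> bool) \<Rightarrow> bool" where
  "hom_le V E W F \<longleftrightarrow> (\<exists>f. (\<forall>x\<in>V. f x \<in> W) \<and> (\<forall>x\<in>V. \<forall>y\<in>V. E x y \<longrightarrow> F (f x) (f y)))"

(* An ordinal alpha is represented by a well-order r (non-strict, as in HOL's Well_order);
   the ordinals < alpha are the elements of Field r.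
   Vertices of G^<alpha>: finite strictly decreasing sequences of elements of Field r. *)
definition dec_seqs :: "'a rel \<Rightarrow> 'a list set" where
  "dec_seqs r = {xs. set xs \<subseteq> Field r \<and> sorted_wrt (\<lambda>x y. (y, x) \<in> r \<and> y \<noteq> x) xs}"

definition seq_edge :: "(nat \<Rightarrow> nat \<Rightarrow> bool) \<Rightarrow> 'a list \<Rightarrow> 'a list \<Rightarrow> bool" where
  "seq_edge E \<nu> \<mu> \<longleftrightarrow> (strict_prefix \<nu> \<mu> \<or> strict_prefix \<mu> \<nu>) \<and> E (length \<nu>) (length \<mu>)"

end

(*
  Parts (i) and (ii) are immediate: the length map is a homomorphism from G^<alpha> to G, and an
  order embedding of alpha into beta acts on decreasing sequences, preserving proper initial
  segments and lengths.

  For (iii), suppose G is not below H. The finite partial homomorphisms from G to H (sequences s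
  with s_i s_j an edge of H whenever i j is an edge of G) form a tree without an infinite branch,
  so its Kleene-Brouwer order is a countable well-order alpha. Given a homomorphism phi from
  G^<alpha> to H, let nu_0 be empty and let nu_(n+1) extend nu_n by the partial homomorphism
  (phi nu_0, ..., phi nu_n). Each new entry properly extends the earlier ones, hence is smaller in
  the Kleene-Brouwer order, so every nu_n is a vertex of G^<alpha>, and i |-> phi nu_i is a
  homomorphism from G to H.
*)

theory Submission
  imports Defs "HOL-Library.Countable"
begin

lemma hom_le_trans:
  assumes "hom_le U E V F" and "hom_le V F W K"
  shows "hom_le U E W K"
proof -
  from assms obtain f g where
    f: "\<forall>x\<in>U. f x \<in> V" "\<forall>x\<in>U. \<forall>y\<in>U. E x y \<longrightarrow> F (f x) (f y)" and
    g: "\<forall>x\<in>V. g x \<in> W" "\<forall>x\<in>V. \<forall>y\<in>V. F x y \<longrightarrow> K (g x) (g y)"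
    unfolding hom_le_def by blast
  then show ?thesis
    unfolding hom_le_def by (intro exI[of _ "g \<circ> f"]) auto
qed

lemma hom_le_dec_seqs_length: "hom_le (dec_seqs r) (seq_edge G) UNIV G"
  unfolding hom_le_def seq_edge_def by (intro exI[of _ length]) simp

lemma take_in_dec_seqs: "\<nu> \<in> dec_seqs r \<Longrightarrow> take k \<nu> \<in> dec_seqs r"
  unfolding dec_seqs_def by (auto simp: sorted_wrt_take dest: in_set_takeD)

lemma snoc_in_dec_seqs:
  assumes "\<nu> \<in> dec_seqs r" and "x \<in> Field r" and "\<And>y. y \<in> set \<nu> \<Longrightarrow> (x, y) \<in> r \<and> x \<noteq> y"
  shows "\<nu> @ [x] \<in> dec_seqs r"
  using assms unfolding dec_seqs_def by (auto simp: sorted_wrt_append)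

lemma map_in_dec_seqs:
  assumes "\<nu> \<in> dec_seqs r" and "inj_on f (Field r)" and "f ` Field r \<subseteq> Field s"
    and "\<And>a b. (a, b) \<in> r \<Longrightarrow> (f a, f b) \<in> s"
  shows "map f \<nu> \<in> dec_seqs s"
proof -
  have fld: "set \<nu> \<subseteq> Field r" and dec: "sorted_wrt (\<lambda>x y. (y, x) \<in> r \<and> y \<noteq> x) \<nu>"
    using assms(1) unfolding dec_seqs_def by auto
  from dec have "sorted_wrt (\<lambda>x y. (f y, f x) \<in> s \<and> f y \<noteq> f x) \<nu>"
  proof (rule sorted_wrt_mono_rel[rotated])
    fix x y assume "x \<in> set \<nu>" "y \<in> set \<nu>" "(y, x) \<in> r \<and> y \<noteq> x"
    then show "(f y, f x) \<in> s \<and> f y \<noteq> f x"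
      using fld assms(2,4) by (auto dest: inj_onD)
  qed
  then show ?thesis
    using fld assms(3) unfolding dec_seqs_def by (auto simp: sorted_wrt_map)
qed

lemma strict_prefix_map: "strict_prefix xs ys \<Longrightarrow> strict_prefix (map f xs) (map f ys)"
proof -
  assume "strict_prefix xs ys"
  then have "prefix (map f xs) (map f ys)" and "length (map f xs) < length (map f ys)"
    by (simp_all add: map_mono_prefix prefix_length_less)
  then show ?thesis
    by (auto simp: strict_prefix_def dest: arg_cong[of _ _ length])
qed

lemma seq_edge_map: "seq_edge G \<nu> \<mu> \<Longrightarrow> seq_edge G (map f \<nu>) (map f \<mu>)"
  unfolding seq_edge_def by (auto intro: strict_prefix_map)

lemma hom_le_dec_seqs_ordLeq:
  assumes "(r, s) \<in> ordLeq"
  shows "hom_le (dec_seqs r) (seq_edge G) (dec_seqs s) (seq_edge G)"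
proof -
  from assms obtain f where wo: "Well_order r" and emb: "embed r s f"
    unfolding ordLeq_def by blast
  have "inj_on f (Field r)" using embed_inj_on[OF wo emb] .
  moreover have "f ` Field r \<subseteq> Field s" using embed_Field[OF emb] .
  moreover have "\<And>a b. (a, b) \<in> r \<Longrightarrow> (f a, f b) \<in> s"
    using embed_compat[OF emb] unfolding compat_def by blast
  ultimately have "map f \<nu> \<in> dec_seqs s" if "\<nu> \<in> dec_seqs r" for \<nu>
    using that by (intro map_in_dec_seqs)
  with seq_edge_map show ?thesis
    unfolding hom_le_def by (intro exI[of _ "map f"]) blast
qed

fun snoc_iter :: "('a list \<Rightarrow> 'a) \<Rightarrow> nat \<Rightarrow> 'a list" where
  "snoc_iter F 0 = []"
| "snoc_iter F (Suc n) = snoc_iter F n @ [F (snoc_iter F n)]"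

lemma snoc_iter_eq_map: "snoc_iter F n = map (\<lambda>i. F (snoc_iter F i)) [0..<n]"
  by (induction n) simp_all

lemma length_snoc_iter [simp]: "length (snoc_iter F n) = n"
  by (induction n) simp_all

lemma take_snoc_iter:
  assumes "k \<le> n"
  shows "take k (snoc_iter F n) = snoc_iter F k"
proof -
  have "take k (snoc_iter F n) = map (\<lambda>i. F (snoc_iter F i)) [0..<k]"
    using assms by (subst snoc_iter_eq_map) (simp add: take_map)
  also have "\<dots> = snoc_iter F k"
    by (rule snoc_iter_eq_map[symmetric])
  finally show ?thesis .
qed

lemma nth_snoc_iter: "k < n \<Longrightarrow> snoc_iter F n ! k = F (snoc_iter F k)"
  using snoc_iter_eq_map[of F n] by simp

lemma strict_prefix_map_upt:
  assumes "m < n"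
  shows "strict_prefix (map h [0..<m]) (map h [0..<n])"
proof -
  have "map h [0..<n] = map h [0..<m] @ h m # map h [Suc m..<n]"
    using assms upt_add_eq_append[of 0 m "n - m"] by (simp add: upt_conv_Cons)
  then show ?thesis
    by (rule strict_prefixI')
qed

lemma strict_prefix_snoc_iter: "i < j \<Longrightarrow> strict_prefix (snoc_iter F i) (snoc_iter F j)"
  using strict_prefix_map_upt by (metis snoc_iter_eq_map)

lemma seq_edge_snoc_iter:
  assumes "\<And>x. \<not> G x x" and "G i j"
  shows "seq_edge G (snoc_iter F i) (snoc_iter F j)"
proof -
  from assms have "i < j \<or> j < i"
    by (cases i j rule: linorder_cases) auto
  with assms(2) show ?thesis
    unfolding seq_edge_def using strict_prefix_snoc_iter by auto
qed

lemma snoc_iter_in_dec_seqs: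
  assumes "\<And>n. snoc_iter F n \<in> dec_seqs r \<Longrightarrow> F (snoc_iter F n) \<in> Field r"
    and "\<And>k n. snoc_iter F n \<in> dec_seqs r \<Longrightarrow> k < n \<Longrightarrow>
      (F (snoc_iter F n), F (snoc_iter F k)) \<in> r \<and> F (snoc_iter F n) \<noteq> F (snoc_iter F k)"
  shows "snoc_iter F n \<in> dec_seqs r"
proof (induction n)
  case 0
  show ?case by (simp add: dec_seqs_def)
next
  case (Suc n)
  have "set (snoc_iter F n) = (\<lambda>k. F (snoc_iter F k)) ` {..<n}"
    by (subst snoc_iter_eq_map) auto
  then have "(F (snoc_iter F n), y) \<in> r \<and> F (snoc_iter F n) \<noteq> y" if "y \<in> set (snoc_iter F n)" for y
    using that assms(2)[OF Suc.IH] by auto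
  with Suc.IH assms(1)[OF Suc.IH] show ?case
    by (simp add: snoc_in_dec_seqs)
qed

text \<open>The end marker \<open>(1, 0)\<close> sorts after every entry \<open>(0, x)\<close>, so proper extensions of a
  sequence come before it and incomparable sequences are compared at their first difference:
  \<open>kb_less\<close> is the Kleene-Brouwer order.\<close>

definition kb_code :: "nat list \<Rightarrow> (nat \<times> nat) list" where
  "kb_code \<sigma> = map (Pair 0) \<sigma> @ [(1, 0)]"

definition kb_less :: "nat list rel" where
  "kb_less = inv_image (lexord (less_than <*lex*> less_than)) kb_code"

lemma kb_less_strict_prefix:
  assumes "strict_prefix \<sigma> \<tau>"
  shows "(\<tau>, \<sigma>) \<in> kb_less"
proof -
  from assms obtain x \<rho> where "\<tau> = \<sigma> @ x # \<rho>"
    by (rule strict_prefixE')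
  moreover have "(map (Pair 0) \<sigma> @ (0, x) # (map (Pair 0) \<rho> @ [(1, 0)]), map (Pair 0) \<sigma> @ (1, 0) # [])
      \<in> lexord (less_than <*lex*> less_than)"
    by (rule lexord_append_left_rightI) simp
  ultimately show ?thesis
    by (simp add: kb_less_def kb_code_def)
qed

lemma kb_less_append_less:
  assumes "x < y"
  shows "(u @ x # v, u @ y # w) \<in> kb_less"
proof -
  have "(map (Pair 0) u @ (0, x) # (map (Pair 0) v @ [(1, 0)]),
      map (Pair 0) u @ (0, y) # (map (Pair 0) w @ [(1, 0)])) \<in> lexord (less_than <*lex*> less_than)"
    by (rule lexord_append_left_rightI) (simp add: assms)
  then show ?thesis
    by (simp add: kb_less_def kb_code_def)
qed

lemma kb_less_irrefl: "(\<sigma>, \<sigma>) \<notin> kb_less"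
  by (simp add: kb_less_def lexord_irreflexive)

lemma trans_kb_less: "trans kb_less"
  unfolding kb_less_def by (intro trans_inv_image lexord_transI trans_lex_prod) simp_all

lemma kb_less_asym: "(\<sigma>, \<tau>) \<in> kb_less \<Longrightarrow> (\<tau>, \<sigma>) \<notin> kb_less"
  using trans_kb_less kb_less_irrefl by (metis transD)

lemma kb_less_linear: "(\<sigma>, \<tau>) \<in> kb_less \<or> \<sigma> = \<tau> \<or> (\<tau>, \<sigma>) \<in> kb_less"
proof -
  have "\<forall>a b. (a, b) \<in> less_than <*lex*> less_than \<or> a = b \<or> (b, a) \<in> less_than <*lex*> less_than"
    by auto
  then have "(kb_code \<sigma>, kb_code \<tau>) \<in> lexord (less_than <*lex*> less_than) \<or> kb_code \<sigma> = kb_code \<tau>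
      \<or> (kb_code \<tau>, kb_code \<sigma>) \<in> lexord (less_than <*lex*> less_than)"
    by (rule lexord_linear)
  moreover have "kb_code \<sigma> = kb_code \<tau> \<Longrightarrow> \<sigma> = \<tau>"
    by (simp add: kb_code_def inj_map_eq_map inj_on_def)
  ultimately show ?thesis
    unfolding kb_less_def by auto
qed

definition leftmost_path :: "nat list set \<Rightarrow> nat \<Rightarrow> nat list" where
  "leftmost_path Q = snoc_iter (\<lambda>u. LEAST c. \<exists>\<sigma>\<in>Q. prefix (u @ [c]) \<sigma>)"

lemma leftmost_path_prefix:
  assumes "Q \<noteq> {}" and "\<forall>j<k. \<exists>\<sigma>\<in>Q. strict_prefix (leftmost_path Q j) \<sigma>"
  shows "\<exists>\<sigma>\<in>Q. prefix (leftmost_path Q k) \<sigma>"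
  using assms(2)
proof (induction k)
  case 0
  then show ?case using assms(1) by (auto simp: leftmost_path_def)
next
  case (Suc k)
  then obtain \<sigma> where "\<sigma> \<in> Q" and "strict_prefix (leftmost_path Q k) \<sigma>"
    by auto
  then obtain c \<rho> where "\<sigma> = leftmost_path Q k @ c # \<rho>"
    by (blast elim: strict_prefixE')
  with \<open>\<sigma> \<in> Q\<close> have "\<exists>c. \<exists>\<sigma>\<in>Q. prefix (leftmost_path Q k @ [c]) \<sigma>"
    by (auto simp: prefix_def)
  then have "\<exists>\<sigma>\<in>Q. prefix (leftmost_path Q k @ [LEAST c. \<exists>\<sigma>\<in>Q. prefix (leftmost_path Q k @ [c]) \<sigma>]) \<sigma>"
    by (rule LeastI_ex)
  then show ?case
    by (simp add: leftmost_path_def)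
qed

lemma leftmost_path_kb_minimal:
  assumes "\<tau> \<in> Q" and "\<not> strict_prefix (leftmost_path Q k) \<tau>"
  shows "(\<tau>, leftmost_path Q k) \<notin> kb_less"
proof
  define F where "F = (\<lambda>u. LEAST c. \<exists>\<sigma>\<in>Q. prefix (u @ [c]) \<sigma>)"
  have p_def: "leftmost_path Q = snoc_iter F"
    by (simp add: leftmost_path_def F_def)
  assume less: "(\<tau>, leftmost_path Q k) \<in> kb_less"
  consider "prefix \<tau> (leftmost_path Q k)" | "\<tau> \<parallel> leftmost_path Q k"
    using assms(2) prefix_cases by blast
  then show False
  proof cases
    case 1
    with less kb_less_irrefl have "strict_prefix \<tau> (leftmost_path Q k)"
      by (auto simp: strict_prefix_def)
    with less show False
      using kb_less_strict_prefix kb_less_asym by blast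
  next
    case 2
    then obtain u b v c w where "b \<noteq> c" and \<tau>: "\<tau> = u @ b # v" and pk: "leftmost_path Q k = u @ c # w"
      using parallel_decomp by blast
    define j where "j = length u"
    have "j < k"
      using pk length_snoc_iter[of F k] by (simp add: j_def p_def)
    then have "u = leftmost_path Q j" and "c = F (leftmost_path Q j)"
      using pk take_snoc_iter[of j k F] nth_snoc_iter[of j k F] by (simp_all add: j_def p_def)
    moreover have "prefix (u @ [b]) \<tau>"
      using \<tau> by simp
    ultimately have "c \<le> b"
      unfolding F_def using assms(1) by (auto intro: Least_le)
    with \<open>b \<noteq> c\<close> have "(leftmost_path Q k, \<tau>) \<in> kb_less"
      using \<tau> pk kb_less_append_less by simp
    with less show False
      using kb_less_asym by blast
  qed
qed

text \<open>The leftmost path through the prefixes of \<open>Q\<close> cannot go on forever, as it would be an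
  infinite branch of \<open>T\<close>; where it stops it sits on a minimal element of \<open>Q\<close>.\<close>

lemma kb_less_minimal_exists:
  assumes prefix_closed: "\<And>\<sigma> \<tau>. prefix \<sigma> \<tau> \<Longrightarrow> \<tau> \<in> T \<Longrightarrow> \<sigma> \<in> T"
    and no_branch: "\<And>f. \<exists>n. map f [0..<n] \<notin> T"
    and "Q \<subseteq> T" and "Q \<noteq> {}"
  shows "\<exists>\<mu>\<in>Q. \<forall>\<tau>\<in>Q. (\<tau>, \<mu>) \<notin> kb_less"
proof -
  define extendable where "extendable u \<longleftrightarrow> (\<exists>\<sigma>\<in>Q. strict_prefix u \<sigma>)" for u
  have "\<exists>k. \<not> extendable (leftmost_path Q k)"
  proof (rule ccontr)
    assume "\<nexists>k. \<not> extendable (leftmost_path Q k)"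
    then have "leftmost_path Q n \<in> T" for n
      using leftmost_path_prefix[OF \<open>Q \<noteq> {}\<close>, of n] prefix_closed \<open>Q \<subseteq> T\<close>
      unfolding extendable_def by blast
    moreover define g where "g i = (LEAST c. \<exists>\<sigma>\<in>Q. prefix (leftmost_path Q i @ [c]) \<sigma>)" for i
    have "leftmost_path Q n = map g [0..<n]" for n
      unfolding leftmost_path_def g_def by (rule snoc_iter_eq_map)
    ultimately show False
      using no_branch[of g] by simp
  qed
  then obtain k where k: "\<not> extendable (leftmost_path Q k)"
    and "\<forall>j<k. extendable (leftmost_path Q j)"
    using exists_least_iff[of "\<lambda>k. \<not> extendable (leftmost_path Q k)"] by blast
  then obtain \<mu> where "\<mu> \<in> Q" and "prefix (leftmost_path Q k) \<mu>"
    using leftmost_path_prefix[OF \<open>Q \<noteq> {}\<close>, of k] unfolding extendable_def by blast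
  with k have "leftmost_path Q k \<in> Q"
    unfolding extendable_def strict_prefix_def by blast
  moreover have "(\<tau>, leftmost_path Q k) \<notin> kb_less" if "\<tau> \<in> Q" for \<tau>
    using that k leftmost_path_kb_minimal[of \<tau> Q k] unfolding extendable_def by blast
  ultimately show ?thesis by blast
qed

lemma wf_kb_less_on:
  assumes "\<And>\<sigma> \<tau>. prefix \<sigma> \<tau> \<Longrightarrow> \<tau> \<in> T \<Longrightarrow> \<sigma> \<in> T"
    and "\<And>f. \<exists>n. map f [0..<n] \<notin> T"
  shows "wf (kb_less \<inter> T \<times> T)"
proof (rule wfI_min)
  fix \<sigma> and Q :: "nat list set"
  assume "\<sigma> \<in> Q"
  show "\<exists>\<mu>\<in>Q. \<forall>\<tau>. (\<tau>, \<mu>) \<in> kb_less \<inter> T \<times> T \<longrightarrow> \<tau> \<notin> Q"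
  proof (cases "Q \<inter> T = {}")
    case True
    with \<open>\<sigma> \<in> Q\<close> show ?thesis by blast
  next
    case False
    have "\<exists>\<mu>\<in>Q \<inter> T. \<forall>\<tau>\<in>Q \<inter> T. (\<tau>, \<mu>) \<notin> kb_less"
      by (rule kb_less_minimal_exists[where T = T]) (use assms False in blast)+
    then show ?thesis by blast
  qed
qed

definition kb_order :: "nat list set \<Rightarrow> nat list rel" where
  "kb_order T = {(\<sigma>, \<tau>). \<sigma> \<in> T \<and> \<tau> \<in> T \<and> (\<sigma> = \<tau> \<or> (\<sigma>, \<tau>) \<in> kb_less)}"

lemma Field_kb_order: "Field (kb_order T) = T"
  unfolding Field_def kb_order_def by auto

lemma kb_order_strict_prefix:
  assumes "strict_prefix \<sigma> \<tau>" and "\<sigma> \<in> T" and "\<tau> \<in> T"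
  shows "(\<tau>, \<sigma>) \<in> kb_order T \<and> \<tau> \<noteq> \<sigma>"
  using assms kb_less_strict_prefix unfolding kb_order_def by auto

lemma Well_order_kb_order:
  assumes "\<And>\<sigma> \<tau>. prefix \<sigma> \<tau> \<Longrightarrow> \<tau> \<in> T \<Longrightarrow> \<sigma> \<in> T"
    and "\<And>f. \<exists>n. map f [0..<n] \<notin> T"
  shows "Well_order (kb_order T)"
  unfolding well_order_on_def linear_order_on_def partial_order_on_def preorder_on_def Field_kb_order
proof (intro conjI)
  show "kb_order T \<subseteq> T \<times> T" and "refl_on T (kb_order T)"
    unfolding kb_order_def refl_on_def by auto
  show "trans (kb_order T)"
    using trans_kb_less unfolding kb_order_def trans_def by blast
  show "antisym (kb_order T)"
    using kb_less_asym unfolding kb_order_def antisym_def by blast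
  show "total_on T (kb_order T)"
    using kb_less_linear unfolding kb_order_def total_on_def by blast
  have "kb_order T - Id = kb_less \<inter> T \<times> T"
    using kb_less_irrefl unfolding kb_order_def by blast
  then show "wf (kb_order T - Id)"
    using wf_kb_less_on[OF assms] by simp
qed

text \<open>A list \<open>\<sigma>\<close> stands for the map \<open>i \<mapsto> \<sigma> ! i\<close> on the initial segment \<open>{0..<length \<sigma>}\<close>.\<close>

definition partial_homs :: "(nat \<Rightarrow> nat \<Rightarrow> bool) \<Rightarrow> (nat \<Rightarrow> nat \<Rightarrow> bool) \<Rightarrow> nat list set" where
  "partial_homs G H = {\<sigma>. \<forall>i<length \<sigma>. \<forall>j<length \<sigma>. G i j \<longrightarrow> H (\<sigma> ! i) (\<sigma> ! j)}"

lemma map_upt_in_partial_homs_iff: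
  "map h [0..<n] \<in> partial_homs G H \<longleftrightarrow> (\<forall>i<n. \<forall>j<n. G i j \<longrightarrow> H (h i) (h j))"
  by (simp add: partial_homs_def)

lemma take_in_partial_homs:
  assumes "\<tau> \<in> partial_homs G H"
  shows "take k \<tau> \<in> partial_homs G H"
  unfolding partial_homs_def
proof (intro CollectI allI impI)
  fix i j
  assume i: "i < length (take k \<tau>)" and j: "j < length (take k \<tau>)" and "G i j"
  then have "H (\<tau> ! i) (\<tau> ! j)"
    using assms unfolding partial_homs_def by auto
  with i j show "H (take k \<tau> ! i) (take k \<tau> ! j)"
    by simp
qed

lemma partial_homs_prefix_closed:
  assumes "prefix \<sigma> \<tau>" and "\<tau> \<in> partial_homs G H"
  shows "\<sigma> \<in> partial_homs G H"
proof -
  from assms(1) have "\<sigma> = take (length \<sigma>) \<tau>"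
    by (auto simp: prefix_def)
  with take_in_partial_homs[OF assms(2)] show ?thesis
    by metis
qed

lemma partial_homs_no_infinite_branch:
  assumes "\<not> hom_le UNIV G UNIV H"
  shows "\<exists>n. map h [0..<n] \<notin> partial_homs G H"
proof (rule ccontr)
  assume "\<nexists>n. map h [0..<n] \<notin> partial_homs G H"
  then have "map h [0..<n] \<in> partial_homs G H" for n
    by blast
  then have below: "\<forall>i<n. \<forall>j<n. G i j \<longrightarrow> H (h i) (h j)" for n
    by (simp only: map_upt_in_partial_homs_iff)
  have "H (h i) (h j)" if "G i j" for i j
  proof -
    have "i < Suc (max i j)" and "j < Suc (max i j)"
      by simp_all
    with below[of "Suc (max i j)"] that show ?thesis
      by blast
  qed
  then have "hom_le UNIV G UNIV H"
    unfolding hom_le_def by (intro exI[of _ h]) simp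
  with assms show False
    by contradiction
qed

lemma hom_le_if_hom_le_kb_order:
  assumes irrefl: "\<And>x. \<not> G x x"
    and "hom_le (dec_seqs (kb_order (partial_homs G H))) (seq_edge G) UNIV H"
  shows "hom_le UNIV G UNIV H"
proof -
  define T where "T = partial_homs G H"
  define D where "D = dec_seqs (kb_order T)"
  from assms(2) obtain \<phi> where \<phi>: "\<And>\<nu> \<mu>. \<nu> \<in> D \<Longrightarrow> \<mu> \<in> D \<Longrightarrow> seq_edge G \<nu> \<mu> \<Longrightarrow> H (\<phi> \<nu>) (\<phi> \<mu>)"
    unfolding hom_le_def D_def T_def by blast
  define F where "F \<nu> = map (\<lambda>i. \<phi> (take i \<nu>)) [0..<Suc (length \<nu>)]" for \<nu>
  define \<nu> where "\<nu> = snoc_iter F"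
  define h where "h i = \<phi> (\<nu> i)" for i
  define S where "S k = map h [0..<Suc k]" for k
  have length_\<nu>: "length (\<nu> k) = k" and take_\<nu>: "i \<le> k \<Longrightarrow> take i (\<nu> k) = \<nu> i" for i k
    by (simp_all add: \<nu>_def take_snoc_iter)
  have F_\<nu>: "F (\<nu> k) = S k" for k
    unfolding F_def S_def h_def by (intro map_cong) (auto simp: length_\<nu> take_\<nu>)
  have edge: "seq_edge G (\<nu> i) (\<nu> j)" if "G i j" for i j
    unfolding \<nu>_def using irrefl that by (rule seq_edge_snoc_iter)
  have S_T: "S k \<in> T" if "\<nu> n \<in> D" and "k \<le> n" for k n
  proof -
    have "\<nu> i \<in> D" if "i \<le> n" for i
      using take_in_dec_seqs[OF \<open>\<nu> n \<in> D\<close>[unfolded D_def], of i] that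
      by (simp add: D_def take_\<nu>)
    then show ?thesis
      unfolding S_def T_def map_upt_in_partial_homs_iff h_def
      using \<open>k \<le> n\<close> \<phi> edge by auto
  qed
  have S_less: "(S n, S k) \<in> kb_order T \<and> S n \<noteq> S k" if "\<nu> n \<in> D" and "k < n" for k n
  proof -
    have "strict_prefix (S k) (S n)"
      unfolding S_def by (rule strict_prefix_map_upt) (use that in simp)
    with S_T[OF that(1), of k] S_T[OF that(1), of n] that(2) show ?thesis
      by (simp add: kb_order_strict_prefix)
  qed
  have "\<nu> n \<in> D" for n
    using snoc_iter_in_dec_seqs[of F "kb_order T" n] S_T S_less F_\<nu> Field_kb_order
    unfolding \<nu>_def[symmetric] D_def[symmetric] by auto
  then have "H (h i) (h j)" if "G i j" for i j
    using \<phi> edge[OF that] unfolding h_def by blast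
  then show ?thesis
    unfolding hom_le_def by (intro exI[of _ h]) simp
qed

lemma countable_Well_order_ordLeq_nat:
  fixes r :: "'a::countable rel"
  assumes "Well_order r"
  shows "\<exists>t :: nat rel. Well_order t \<and> (r, t) \<in> ordLeq"
proof -
  have "inj_on to_nat (Field r)"
    by (simp add: inj_on_def)
  with assms have "Well_order (dir_image r to_nat)" and "(r, dir_image r to_nat) \<in> ordIso"
    by (simp_all add: Well_order_dir_image dir_image_ordIso)
  then show ?thesis
    using ordIso_iff_ordLeq by blast
qed

lemma hom_le_if_hom_le_countable_ordinals:
  fixes G H :: "nat \<Rightarrow> nat \<Rightarrow> bool"
  assumes irrefl: "\<And>x. \<not> G x x"
    and countable: "\<forall>t :: nat rel. Well_order t \<longrightarrow> hom_le (dec_seqs t) (seq_edge G) UNIV H"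
  shows "hom_le UNIV G UNIV H"
proof (rule ccontr)
  assume no_hom: "\<not> hom_le UNIV G UNIV H"
  have "Well_order (kb_order (partial_homs G H))"
  proof (rule Well_order_kb_order)
    show "\<sigma> \<in> partial_homs G H" if "prefix \<sigma> \<tau>" and "\<tau> \<in> partial_homs G H" for \<sigma> \<tau>
      using that by (rule partial_homs_prefix_closed)
    show "\<exists>n. map f [0..<n] \<notin> partial_homs G H" for f
      using no_hom by (rule partial_homs_no_infinite_branch)
  qed
  then obtain t :: "nat rel" where "Well_order t" and kb_le_t: "(kb_order (partial_homs G H), t) \<in> ordLeq"
    using countable_Well_order_ordLeq_nat by blast
  from countable \<open>Well_order t\<close> have "hom_le (dec_seqs t) (seq_edge G) UNIV H"
    by blast
  with hom_le_dec_seqs_ordLeq[OF kb_le_t]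
  have "hom_le (dec_seqs (kb_order (partial_homs G H))) (seq_edge G) UNIV H"
    by (rule hom_le_trans)
  with irrefl have "hom_le UNIV G UNIV H"
    by (rule hom_le_if_hom_le_kb_order)
  with no_hom show False
    by contradiction
qed

theorem lemma8:
  fixes G H :: "nat \<Rightarrow> nat \<Rightarrow> bool" and r :: "'a rel" and s :: "'b rel"
  assumes "is_graph G" and "is_graph H"
  shows "(Well_order r \<longrightarrow> hom_le (dec_seqs r) (seq_edge G) UNIV G)
    \<and> ((r, s) \<in> ordLeq \<longrightarrow> hom_le (dec_seqs r) (seq_edge G) (dec_seqs s) (seq_edge G))
    \<and> (hom_le UNIV G UNIV H \<longleftrightarrow>
         (\<forall>t :: nat rel. Well_order t \<longrightarrow> hom_le (dec_seqs t) (seq_edge G) UNIV H))"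
proof (intro conjI impI iffI allI)
  show "hom_le (dec_seqs r) (seq_edge G) UNIV G"
    by (rule hom_le_dec_seqs_length)
  show "hom_le (dec_seqs r) (seq_edge G) (dec_seqs s) (seq_edge G)" if "(r, s) \<in> ordLeq"
    using that by (rule hom_le_dec_seqs_ordLeq)
  show "hom_le (dec_seqs t) (seq_edge G) UNIV H" if "hom_le UNIV G UNIV H" for t :: "nat rel"
    using hom_le_dec_seqs_length that by (rule hom_le_trans)
  show "hom_le UNIV G UNIV H" if "\<forall>t :: nat rel. Well_order t \<longrightarrow> hom_le (dec_seqs t) (seq_edge G) UNIV H"
    using assms(1) that unfolding is_graph_def by (intro hom_le_if_hom_le_countable_ordinals) blast+
qed

end
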